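(* For every ranking profile $R$ over a finite set of $m\geq 2$ candidates, there exists a ranking that is pair-priceable for $R$.
   Context: Let $C$ be a set of $m$ candidates. A ranking is a strict linear order over $C$; $\mathcal{R}$ denotes the set of all rankings over $C$. A ranking profile is a function $R:\mathcal{R}\to[0,1]$ with $\sum_\succ R(\succ)=1$. For a ranking $\succ$, $A(\succ)=\{(x,y)\in C\times C:x\succ y\}$. For $x\in X\subseteq C$, $u(\succ,x,X)=|\{y\in X\setminus\{x\}:x\succ y\}|$. A ranking $\rhd=x_1,\dots,x_m$ is pair-priceable for $R$ if there is $\pi:\mathcal{R}\times A(\rhd)\to[0,1]$ such that (1) $\pi(\succ,(x_i,x_j))\leq u(\succ,x_i,\{x_i,x_j\})$ for all $\succ$ and $(x_i,x_j)\in A(\rhd)$; (2) $\sum_{(x_i,x_j)\in A(\rhd)}\pi(\succ,(x_i,x_j))\leq\binom{m}{2}R(\succ)$ for all $\succ$; (3) $\sum_\succ\pi(\succ,(x_i,x_j))\leq1$ for all $(x_i,x_j)\in A(\rhd)$; (4) $\sum_\succ\sum_{(x_i,x_j)\in A(\rhd)}\pi(\succ,(x_i,x_j))>\binom{m}{2}-1$. *)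

theory Defs
  imports Main "HOL-Combinatorics.Multiset_Permutations"
begin

definition rankings :: "'a set \<Rightarrow> 'a list set" where
  "rankings C = permutations_of_set C"

definition prefers :: "'a list \<Rightarrow> 'a \<Rightarrow> 'a \<Rightarrow> bool" where
  "prefers r x y \<longleftrightarrow> (\<exists>i j. i < j \<and> j < length r \<and> r ! i = x \<and> r ! j = y)"

definition A_pairs :: "'a list \<Rightarrow> ('a \<times> 'a) set" where
  "A_pairs r = {(x, y). prefers r x y}"

definition u :: "'a list \<Rightarrow> 'a \<Rightarrow> 'a set \<Rightarrow> nat" where
  "u r x X = card {y \<in> X - {x}. prefers r x y}"

definition ranking_profile :: "'a set \<Rightarrow> ('a list \<Rightarrow> real) \<Rightarrow> bool" where
  "ranking_profile C R \<longleftrightarrow>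
     (\<forall>r \<in> rankings C. 0 \<le> R r \<and> R r \<le> 1) \<and> (\<Sum>r \<in> rankings C. R r) = 1"

definition pair_priceable :: "'a set \<Rightarrow> ('a list \<Rightarrow> real) \<Rightarrow> 'a list \<Rightarrow> bool" where
  "pair_priceable C R rr \<longleftrightarrow>
     (\<exists>\<pi> :: 'a list \<Rightarrow> ('a \<times> 'a) \<Rightarrow> real.
        (\<forall>r \<in> rankings C. \<forall>p \<in> A_pairs rr. 0 \<le> \<pi> r p \<and> \<pi> r p \<le> 1) \<and>
        (\<forall>r \<in> rankings C. \<forall>(x, y) \<in> A_pairs rr. \<pi> r (x, y) \<le> real (u r x {x, y})) \<and>
        (\<forall>r \<in> rankings C. (\<Sum>p \<in> A_pairs rr. \<pi> r p) \<le> real (card C choose 2) * R r) \<and>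
        (\<forall>p \<in> A_pairs rr. (\<Sum>r \<in> rankings C. \<pi> r p) \<le> 1) \<and>
        (\<Sum>r \<in> rankings C. \<Sum>p \<in> A_pairs rr. \<pi> r p) > real (card C choose 2) - 1)"

end

(*
  Induction on the number of ranked candidates, with the voters always ranking all of C.
  For candidates D with |D| = n + 1 >= 3 and a profile rho we find a leader c in D and, for every
  other y in D, one unit of weight taken from voters who rank c above y, drawing at most
  (n+1 choose 2) rho r from each voter r.  Putting c first pays for the n pairs (c, y); the unused
  budget, rescaled by 1 / (n choose 2), is again a profile, and the induction hypothesis prices a
  ranking of D - {c} with it.  For |D| = 2 the majority pair is paid for directly.

  Write lambda(x, y) (pref_weight) for the weight of the voters ranking x above y.  For |D| >= 4
  a Borda winner c is a leader: comparing Borda scores shows that the k opponents y against which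
  c is weakest still have total support sum lambda(c, y) >= k (k + 1) / (2 |D|), which is enough
  for a greedy allocation.  For |D| = 3 some candidate is ranked last with weight at most 1/3,
  and a short case analysis yields a leader satisfying Hall's condition.
*)

theory Submission
  imports Defs
begin

section \<open>Fractional allocations\<close>

lemma sum_filter_of_bool:
  fixes w :: "'r \<Rightarrow> real"
  assumes "finite V"
  shows "sum w {r \<in> V. P r} = (\<Sum>r\<in>V. w r * of_bool (P r))"
  unfolding sum.inter_filter[OF assms] by (intro sum.cong) auto

lemma sum_filter_mono:
  fixes w :: "'r \<Rightarrow> real"
  assumes "finite V" and "\<forall>r\<in>V. 0 \<le> w r" and "\<forall>r\<in>V. P r \<longrightarrow> Q r"
  shows "sum w {r \<in> V. P r} \<le> sum w {r \<in> V. Q r}"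
  using assms by (intro sum_mono2) auto

lemma sum_filter_split:
  fixes w :: "'r \<Rightarrow> real"
  assumes "finite V"
  shows "sum w {r \<in> V. P r} = sum w {r \<in> V. P r \<and> Q r} + sum w {r \<in> V. P r \<and> \<not> Q r}"
  using assms by (simp add: sum.inter_filter sum.distrib[symmetric] cong: if_cong) (rule sum.cong; auto)

lemma sum_filter_conj_ge:
  fixes w :: "'r \<Rightarrow> real"
  assumes "finite V" and "\<forall>r\<in>V. 0 \<le> w r"
  shows "sum w {r \<in> V. P r} + sum w {r \<in> V. Q r} - sum w V \<le> sum w {r \<in> V. P r \<and> Q r}"
proof -
  have "sum w {r \<in> V. P r} + sum w {r \<in> V. Q r} - sum w V
      = (\<Sum>r\<in>V. (if P r then w r else 0) + (if Q r then w r else 0) - w r)"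
    using assms(1) by (simp add: sum.inter_filter sum.distrib sum_subtractf)
  also have "\<dots> \<le> (\<Sum>r\<in>V. if P r \<and> Q r then w r else 0)"
    using assms(2) by (intro sum_mono) auto
  finally show ?thesis
    using assms(1) by (simp add: sum.inter_filter)
qed

lemma sub_weight_exists:
  fixes w :: "'r \<Rightarrow> real"
  assumes "finite V" and "\<forall>r\<in>V. 0 \<le> w r" and "0 \<le> d" and "d \<le> sum w {r \<in> V. P r}"
  obtains f where "\<forall>r\<in>V. 0 \<le> f r \<and> f r \<le> w r \<and> (\<not> P r \<longrightarrow> f r = 0)" and "sum f V = d"
proof
  define s where "s = sum w {r \<in> V. P r}"
  define f where "f r = (if P r then d / s * w r else 0)" for r
  have ratio: "0 \<le> d / s" "d / s \<le> 1"
    using assms(3,4) by (auto simp: s_def divide_le_eq)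
  show "\<forall>r\<in>V. 0 \<le> f r \<and> f r \<le> w r \<and> (\<not> P r \<longrightarrow> f r = 0)"
    using assms(2) ratio unfolding f_def by (auto intro: mult_left_le_one_le simp del: times_divide_eq_left)
  have "sum f V = d / s * s"
    using assms(1) by (simp add: f_def s_def sum.inter_filter sum_distrib_left if_distrib cong: if_cong)
  also have "\<dots> = d"
    using assms(3,4) by (cases "s = 0") (auto simp: s_def)
  finally show "sum f V = d" .
qed

definition unit_allocation ::
    "'r set \<Rightarrow> ('r \<Rightarrow> real) \<Rightarrow> ('b \<Rightarrow> 'r \<Rightarrow> bool) \<Rightarrow> 'b set \<Rightarrow> ('b \<Rightarrow> 'r \<Rightarrow> real) \<Rightarrow> bool" where
  "unit_allocation V w P Y \<phi> \<longleftrightarrow>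
     (\<forall>y\<in>Y. \<forall>r\<in>V. 0 \<le> \<phi> y r \<and> (\<not> P y r \<longrightarrow> \<phi> y r = 0)) \<and>
     (\<forall>y\<in>Y. sum (\<phi> y) V = 1) \<and>
     (\<forall>r\<in>V. (\<Sum>y\<in>Y. \<phi> y r) \<le> w r)"

lemma unit_allocation_empty: "\<forall>r\<in>V. 0 \<le> w r \<Longrightarrow> unit_allocation V w P {} \<phi>"
  by (simp add: unit_allocation_def)

lemma unit_allocation_insert:
  assumes "unit_allocation V w P Y \<phi>" and "y \<notin> Y" and "finite Y"
    and "\<forall>r\<in>V. 0 \<le> f r \<and> f r \<le> w r - (\<Sum>y\<in>Y. \<phi> y r) \<and> (\<not> P y r \<longrightarrow> f r = 0)"
    and "sum f V = 1"
  shows "unit_allocation V w P (insert y Y) (\<phi>(y := f))"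
proof -
  have "(\<Sum>y'\<in>Y. (\<phi>(y := f)) y' r) = (\<Sum>y'\<in>Y. \<phi> y' r)" for r
    using assms(2) by (intro sum.cong) auto
  then show ?thesis
    using assms by (auto simp: unit_allocation_def)
qed

lemma unit_allocation_total:
  assumes "unit_allocation V w P Y \<phi>"
  shows "(\<Sum>r\<in>V. \<Sum>y\<in>Y. \<phi> y r) = real (card Y)"
proof -
  have "(\<Sum>r\<in>V. \<Sum>y\<in>Y. \<phi> y r) = (\<Sum>y\<in>Y. sum (\<phi> y) V)"
    by (rule sum.swap)
  also have "\<dots> = (\<Sum>y\<in>Y. 1)"
    using assms by (intro sum.cong) (auto simp: unit_allocation_def)
  finally show ?thesis by simp
qed

text \<open>Serving the demands in order, the first \<open>j\<close> of them use \<open>j\<close> units in total, so the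
  next one still finds a unit in its support.\<close>

lemma unit_allocation_greedy:
  fixes w :: "'r \<Rightarrow> real"
  assumes V: "finite V" and w: "\<forall>r\<in>V. 0 \<le> w r" and "distinct ys"
    and "\<forall>j<length ys. real (Suc j) \<le> sum w {r \<in> V. P (ys ! j) r}"
  shows "\<exists>\<phi>. unit_allocation V w P (set ys) \<phi>"
  using assms(3,4)
proof (induction ys rule: rev_induct)
  case Nil
  then show ?case using unit_allocation_empty[OF w] by auto
next
  case (snoc y ys)
  have y: "y \<notin> set ys" and "distinct ys"
    using snoc.prems(1) by auto
  moreover have "\<forall>j<length ys. real (Suc j) \<le> sum w {r \<in> V. P (ys ! j) r}"
  proof (intro allI impI)
    fix j assume "j < length ys"
    then show "real (Suc j) \<le> sum w {r \<in> V. P (ys ! j) r}"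
      using snoc.prems(2)[rule_format, of j] by (simp add: nth_append)
  qed
  ultimately obtain \<phi> where \<phi>: "unit_allocation V w P (set ys) \<phi>"
    using snoc.IH by blast
  define w' where "w' r = w r - (\<Sum>y\<in>set ys. \<phi> y r)" for r
  have w': "\<forall>r\<in>V. 0 \<le> w' r"
    using \<phi> by (simp add: unit_allocation_def w'_def)
  have "real (length ys) + 1 \<le> sum w {r \<in> V. P y r}"
    using snoc.prems(2) by (auto dest: spec[of _ "length ys"])
  moreover have "sum (\<lambda>r. \<Sum>y\<in>set ys. \<phi> y r) {r \<in> V. P y r} \<le> (\<Sum>r\<in>V. \<Sum>y\<in>set ys. \<phi> y r)"
    using \<phi> V by (intro sum_mono2) (auto simp: unit_allocation_def intro: sum_nonneg)
  moreover have "(\<Sum>r\<in>V. \<Sum>y\<in>set ys. \<phi> y r) = real (length ys)"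
    using unit_allocation_total[OF \<phi>] \<open>distinct ys\<close> by (simp add: distinct_card)
  ultimately have "1 \<le> sum w' {r \<in> V. P y r}"
    by (simp add: w'_def sum_subtractf)
  then obtain f where "\<forall>r\<in>V. 0 \<le> f r \<and> f r \<le> w' r \<and> (\<not> P y r \<longrightarrow> f r = 0)" "sum f V = 1"
    by (rule sub_weight_exists[OF V w' zero_le_one])
  then have "unit_allocation V w P (insert y (set ys)) (\<phi>(y := f))"
    using unit_allocation_insert[OF \<phi> y] by (simp add: w'_def)
  then show ?case by auto
qed

text \<open>The unit for \<open>A\<close> is drawn from where \<open>B\<close> fails as far as possible; Hall's condition for
  the two demands then leaves a unit for \<open>B\<close>.\<close>

lemma sub_weight_sparing:
  fixes w :: "'r \<Rightarrow> real"
  assumes V: "finite V" and w: "\<forall>r\<in>V. 0 \<le> w r"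
    and A: "1 \<le> sum w {r \<in> V. A r}" and B: "1 \<le> sum w {r \<in> V. B r}"
    and AB: "2 \<le> sum w {r \<in> V. A r \<or> B r}"
  obtains f where "\<forall>r\<in>V. 0 \<le> f r \<and> f r \<le> w r \<and> (\<not> A r \<longrightarrow> f r = 0)" and "sum f V = 1"
    and "1 \<le> sum (\<lambda>r. w r - f r) {r \<in> V. B r}"
proof -
  define only_A where "only_A = sum w {r \<in> V. A r \<and> \<not> B r}"
  define t where "t = min 1 only_A"
  have "0 \<le> only_A"
    unfolding only_A_def using w by (intro sum_nonneg) auto
  then have "0 \<le> t" "t \<le> sum w {r \<in> V. A r \<and> \<not> B r}"
    by (auto simp: t_def only_A_def)
  then obtain f1 where f1: "\<forall>r\<in>V. 0 \<le> f1 r \<and> f1 r \<le> w r \<and> (\<not> (A r \<and> \<not> B r) \<longrightarrow> f1 r = 0)"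
    and sum_f1: "sum f1 V = t"
    by (rule sub_weight_exists[OF V w])
  have "0 \<le> sum w {r \<in> V. A r \<and> B r}"
    using w by (intro sum_nonneg) auto
  moreover have "sum w {r \<in> V. A r} = sum w {r \<in> V. A r \<and> B r} + only_A"
    unfolding only_A_def by (rule sum_filter_split[OF V])
  ultimately have rest: "1 - t \<le> sum w {r \<in> V. A r \<and> B r}"
    using A by (auto simp: t_def)
  have "0 \<le> 1 - t"
    by (simp add: t_def)
  then obtain f2 where f2: "\<forall>r\<in>V. 0 \<le> f2 r \<and> f2 r \<le> w r \<and> (\<not> (A r \<and> B r) \<longrightarrow> f2 r = 0)"
    and sum_f2: "sum f2 V = 1 - t"
    using rest by (rule sub_weight_exists[OF V w])
  define f where "f r = f1 r + f2 r" for r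
  have f_bounds: "\<forall>r\<in>V. 0 \<le> f r \<and> f r \<le> w r \<and> (\<not> A r \<longrightarrow> f r = 0)"
    using f1 f2 by (auto simp: f_def)
  have f_sum: "sum f V = 1"
    using sum_f1 sum_f2 by (simp add: f_def sum.distrib)
  have "sum f {r \<in> V. B r} = sum f2 {r \<in> V. B r}"
    using f1 by (intro sum.cong) (auto simp: f_def)
  also have "\<dots> \<le> sum f2 V"
    using f2 V by (intro sum_mono2) auto
  finally have used: "sum f {r \<in> V. B r} \<le> 1 - t"
    using sum_f2 by simp
  have "{r \<in> V. (A r \<or> B r) \<and> B r} = {r \<in> V. B r}"
    and "{r \<in> V. (A r \<or> B r) \<and> \<not> B r} = {r \<in> V. A r \<and> \<not> B r}"
    by auto
  then have "sum w {r \<in> V. A r \<or> B r} = sum w {r \<in> V. B r} + only_A"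
    using sum_filter_split[OF V, of w "\<lambda>r. A r \<or> B r" B] by (simp only: only_A_def)
  then have "1 \<le> sum (\<lambda>r. w r - f r) {r \<in> V. B r}"
    using used B AB by (auto simp: sum_subtractf t_def)
  then show thesis
    by (rule that[OF f_bounds f_sum])
qed

lemma unit_allocation_pair:
  fixes w :: "'r \<Rightarrow> real"
  assumes V: "finite V" and w: "\<forall>r\<in>V. 0 \<le> w r" and ab: "a \<noteq> b"
    and "1 \<le> sum w {r \<in> V. P a r}" and "1 \<le> sum w {r \<in> V. P b r}"
    and "2 \<le> sum w {r \<in> V. P a r \<or> P b r}"
  shows "\<exists>\<phi>. unit_allocation V w P {a, b} \<phi>"
proof -
  obtain f where f: "\<forall>r\<in>V. 0 \<le> f r \<and> f r \<le> w r \<and> (\<not> P a r \<longrightarrow> f r = 0)" "sum f V = 1"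
    and enough: "1 \<le> sum (\<lambda>r. w r - f r) {r \<in> V. P b r}"
    using sub_weight_sparing[OF V w assms(4-6)] by blast
  have "unit_allocation V w P (insert a {}) ((\<lambda>_ _. 0)(a := f))"
    using f by (intro unit_allocation_insert unit_allocation_empty w) auto
  then have alloc_a: "unit_allocation V w P {a} ((\<lambda>_ _. 0)(a := f))"
    by simp
  have "\<forall>r\<in>V. 0 \<le> w r - f r"
    using f by auto
  then obtain g where "\<forall>r\<in>V. 0 \<le> g r \<and> g r \<le> w r - f r \<and> (\<not> P b r \<longrightarrow> g r = 0)"
    and "sum g V = 1"
    using enough by (rule sub_weight_exists[OF V _ zero_le_one])
  then have "unit_allocation V w P (insert b {a}) (((\<lambda>_ _. 0)(a := f))(b := g))"
    using ab by (intro unit_allocation_insert[OF alloc_a]) auto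
  then show ?thesis
    by (auto simp: insert_commute)
qed

section \<open>Rankings and pairwise preference weights\<close>

lemma rankingsD:
  assumes "r \<in> rankings C"
  shows "set r = C" and "distinct r"
  using assms by (auto simp: rankings_def dest: permutations_of_setD)

lemma finite_rankings [simp]: "finite (rankings C)"
  by (simp add: rankings_def)

lemma prefers_set: "prefers r x y \<Longrightarrow> x \<in> set r \<and> y \<in> set r"
  unfolding prefers_def by auto

lemma prefers_asym: "distinct r \<Longrightarrow> prefers r x y \<Longrightarrow> \<not> prefers r y x"
  unfolding prefers_def by (metis nth_eq_iff_index_eq order.strict_trans not_less_iff_gr_or_eq)

lemma prefers_irrefl: "distinct r \<Longrightarrow> \<not> prefers r x x"
  using prefers_asym by metis

lemma prefers_trans: "distinct r \<Longrightarrow> prefers r x y \<Longrightarrow> prefers r y z \<Longrightarrow> prefers r x z"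
  unfolding prefers_def by (metis nth_eq_iff_index_eq order.strict_trans)

lemma prefers_total: "x \<in> set r \<Longrightarrow> y \<in> set r \<Longrightarrow> x \<noteq> y \<Longrightarrow> prefers r x y \<or> prefers r y x"
  unfolding prefers_def in_set_conv_nth by (metis linorder_neqE_nat)

lemma prefers_Nil [simp]: "\<not> prefers [] x y"
  by (simp add: prefers_def)

lemma prefers_Cons: "prefers (c # l) x y \<longleftrightarrow> x = c \<and> y \<in> set l \<or> prefers l x y"
proof
  assume "prefers (c # l) x y"
  then obtain i j where "i < j" "j < Suc (length l)" "(c # l) ! i = x" "(c # l) ! j = y"
    unfolding prefers_def by auto
  then show "x = c \<and> y \<in> set l \<or> prefers l x y"
    unfolding prefers_def by (cases i; cases j) auto
next
  assume "x = c \<and> y \<in> set l \<or> prefers l x y"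
  then show "prefers (c # l) x y"
  proof
    assume "x = c \<and> y \<in> set l"
    then obtain j where "j < length l" "l ! j = y" "x = c"
      by (auto simp: in_set_conv_nth)
    then show ?thesis
      unfolding prefers_def by (intro exI[of _ 0] exI[of _ "Suc j"]) auto
  next
    assume "prefers l x y"
    then obtain i j where "i < j" "j < length l" "l ! i = x" "l ! j = y"
      unfolding prefers_def by blast
    then show ?thesis
      unfolding prefers_def by (intro exI[of _ "Suc i"] exI[of _ "Suc j"]) auto
  qed
qed

lemma ranking_profile_nonneg: "ranking_profile C \<rho> \<Longrightarrow> \<forall>r\<in>rankings C. 0 \<le> \<rho> r"
  by (simp add: ranking_profile_def)

lemma ranking_profile_sum: "ranking_profile C \<rho> \<Longrightarrow> sum \<rho> (rankings C) = 1"
  by (simp add: ranking_profile_def)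

lemma ranking_profileI:
  assumes "\<forall>r\<in>rankings C. 0 \<le> \<rho> r" and "sum \<rho> (rankings C) = 1"
  shows "ranking_profile C \<rho>"
  using assms member_le_sum[of _ "rankings C" \<rho>] by (auto simp: ranking_profile_def)

definition pref_weight :: "'a set \<Rightarrow> ('a list \<Rightarrow> real) \<Rightarrow> 'a \<Rightarrow> 'a \<Rightarrow> real" where
  "pref_weight C \<rho> x y = sum \<rho> {r \<in> rankings C. prefers r x y}"

lemma pref_weight_of_bool:
  "pref_weight C \<rho> x y = (\<Sum>r\<in>rankings C. \<rho> r * of_bool (prefers r x y))"
  unfolding pref_weight_def by (rule sum_filter_of_bool[OF finite_rankings])

lemma pref_weight_nonneg: "ranking_profile C \<rho> \<Longrightarrow> 0 \<le> pref_weight C \<rho> x y"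
  unfolding pref_weight_def by (intro sum_nonneg) (auto dest: ranking_profile_nonneg)

lemma pref_weight_self: "pref_weight C \<rho> x x = 0"
proof -
  have "{r \<in> rankings C. prefers r x x} = {}"
    by (auto dest: rankingsD(2) simp: prefers_irrefl)
  then show ?thesis
    unfolding pref_weight_def by (metis sum.empty)
qed

lemma pref_weight_swap:
  assumes "ranking_profile C \<rho>" and "x \<in> C" "y \<in> C" "x \<noteq> y"
  shows "pref_weight C \<rho> x y + pref_weight C \<rho> y x = 1"
proof -
  have "pref_weight C \<rho> x y + pref_weight C \<rho> y x
      = (\<Sum>r\<in>rankings C. \<rho> r * (of_bool (prefers r x y) + of_bool (prefers r y x)))"
    by (simp add: pref_weight_of_bool sum.distrib distrib_left)
  also have "\<dots> = sum \<rho> (rankings C)"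
  proof (rule sum.cong)
    fix r assume "r \<in> rankings C"
    then have "prefers r x y \<noteq> prefers r y x"
      using assms(2-4) prefers_total prefers_asym by (metis rankingsD)
    then show "\<rho> r * (of_bool (prefers r x y) + of_bool (prefers r y x)) = \<rho> r"
      by auto
  qed simp
  finally show ?thesis
    using ranking_profile_sum[OF assms(1)] by simp
qed

lemma pref_weight_triangle:
  assumes "ranking_profile C \<rho>" and "c \<in> C" "y \<in> C" "z \<in> C" "y \<noteq> c" "y \<noteq> z"
  shows "of_bool (z = c) \<le> pref_weight C \<rho> y z - pref_weight C \<rho> c z + pref_weight C \<rho> c y"
proof -
  have "(\<Sum>r\<in>rankings C. \<rho> r * of_bool (z = c))
      \<le> (\<Sum>r\<in>rankings C. \<rho> r * (of_bool (prefers r y z) - of_bool (prefers r c z) + of_bool (prefers r c y)))"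
  proof (intro sum_mono mult_left_mono)
    fix r assume r: "r \<in> rankings C"
    show "0 \<le> \<rho> r"
      using r ranking_profile_nonneg[OF assms(1)] by blast
    have total: "prefers r a b \<or> prefers r b a" if "a \<in> C" "b \<in> C" "a \<noteq> b" for a b
      using that prefers_total rankingsD(1)[OF r] by metis
    have "distinct r"
      using rankingsD(2)[OF r] .
    show "of_bool (z = c) \<le> (of_bool (prefers r y z) - of_bool (prefers r c z) + of_bool (prefers r c y) :: real)"
    proof (cases "z = c")
      case True
      then show ?thesis
        using total[OF assms(3,2,5)] prefers_irrefl[OF \<open>distinct r\<close>] by auto
    next
      case False
      have "prefers r c z \<Longrightarrow> prefers r y z \<or> prefers r c y"
        using total[OF assms(3,4,6)] prefers_trans[OF \<open>distinct r\<close>] by blast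
      then show ?thesis
        using False by auto
    qed
  qed
  then show ?thesis
    using ranking_profile_sum[OF assms(1)]
    by (simp add: pref_weight_of_bool sum.distrib sum_subtractf algebra_simps sum_distrib_right[symmetric])
qed

lemma sum_pref_weight_pairs:
  assumes "ranking_profile C \<rho>" and "Y \<subseteq> C" and "finite Y"
  shows "2 * (\<Sum>y\<in>Y. \<Sum>z\<in>Y. pref_weight C \<rho> y z) = real (card Y) * (real (card Y) - 1)"
proof -
  have row: "(\<Sum>z\<in>Y. pref_weight C \<rho> y z + pref_weight C \<rho> z y) = real (card Y) - 1" if "y \<in> Y" for y
  proof -
    have "(\<Sum>z\<in>Y. pref_weight C \<rho> y z + pref_weight C \<rho> z y) = (\<Sum>z\<in>Y. 1 - of_bool (z = y))"
      using that assms by (intro sum.cong) (auto simp: pref_weight_self intro!: pref_weight_swap)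
    then show ?thesis
      using that assms(3) by (simp add: sum_subtractf)
  qed
  have "(\<Sum>y\<in>Y. \<Sum>z\<in>Y. pref_weight C \<rho> z y) = (\<Sum>y\<in>Y. \<Sum>z\<in>Y. pref_weight C \<rho> y z)"
    by (rule sum.swap)
  then have "2 * (\<Sum>y\<in>Y. \<Sum>z\<in>Y. pref_weight C \<rho> y z)
      = (\<Sum>y\<in>Y. \<Sum>z\<in>Y. pref_weight C \<rho> y z) + (\<Sum>y\<in>Y. \<Sum>z\<in>Y. pref_weight C \<rho> z y)"
    by simp
  also have "\<dots> = (\<Sum>y\<in>Y. \<Sum>z\<in>Y. pref_weight C \<rho> y z + pref_weight C \<rho> z y)"
    by (simp add: sum.distrib)
  also have "\<dots> = real (card Y) * (real (card Y) - 1)"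
    using row by simp
  finally show ?thesis .
qed

section \<open>A leader among four or more candidates\<close>

lemma real_choose_two: "2 * real (n choose 2) = real n * (real n - 1)"
proof (induction n)
  case (Suc n)
  have "Suc n choose 2 = n + (n choose 2)"
    by (simp add: numeral_2_eq_2)
  with Suc show ?case
    by (simp add: algebra_simps)
qed simp

lemma borda_score_diff_ge:
  assumes prof: "ranking_profile C \<rho>" and D: "D \<subseteq> C" "finite D" and c: "c \<in> D"
    and Y: "Y \<subseteq> D - {c}" and y: "y \<in> Y"
  shows "1 - (real (card D) - real (card Y)) * pref_weight C \<rho> c y
           + (\<Sum>z\<in>Y. pref_weight C \<rho> y z - pref_weight C \<rho> c z)
         \<le> (\<Sum>z\<in>D. pref_weight C \<rho> y z) - (\<Sum>z\<in>D. pref_weight C \<rho> c z)"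
proof -
  let ?w = "pref_weight C \<rho>"
  have YD: "Y \<subseteq> D" and "finite Y"
    using Y D(2) finite_subset by auto
  then have card_rest: "card (D - Y) = card D - card Y" and "card Y \<le> card D"
    using card_Diff_subset card_mono[OF D(2)] by auto
  have "(\<Sum>z\<in>D - Y. of_bool (z = c) - ?w c y) \<le> (\<Sum>z\<in>D - Y. ?w y z - ?w c z)"
  proof (rule sum_mono)
    fix z assume "z \<in> D - Y"
    then have "c \<in> C" "y \<in> C" "z \<in> C" "y \<noteq> c" "y \<noteq> z"
      using y Y D c by auto
    from pref_weight_triangle[OF prof this]
    show "of_bool (z = c) - ?w c y \<le> ?w y z - ?w c z"
      by linarith
  qed
  moreover have "(D - Y) \<inter> {c} = {c}"
    using c Y by auto
  then have "(\<Sum>z\<in>D - Y. of_bool (z = c) - ?w c y) = 1 - (real (card D) - real (card Y)) * ?w c y"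
    using D(2) card_rest \<open>card Y \<le> card D\<close> by (simp add: sum_subtractf of_nat_diff)
  moreover have "(\<Sum>z\<in>D. ?w y z - ?w c z) = (\<Sum>z\<in>D - Y. ?w y z - ?w c z) + (\<Sum>z\<in>Y. ?w y z - ?w c z)"
    by (rule sum.subset_diff[OF YD D(2)])
  ultimately show ?thesis
    by (simp add: sum_subtractf)
qed

text \<open>Sum the previous inequality over \<open>y \<in> Y\<close>: the right-hand sides are nonpositive for a
  Borda winner \<open>c\<close>, and the pairs inside \<open>Y\<close> contribute \<open>|Y| (|Y| - 1) / 2\<close>.\<close>

lemma borda_winner_pref_weight_bound:
  assumes prof: "ranking_profile C \<rho>" and D: "D \<subseteq> C" "finite D" and c: "c \<in> D"
    and winner: "\<forall>x\<in>D. (\<Sum>z\<in>D. pref_weight C \<rho> x z) \<le> (\<Sum>z\<in>D. pref_weight C \<rho> c z)"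
    and Y: "Y \<subseteq> D - {c}"
  shows "real (card Y) * (real (card Y) + 1) \<le> 2 * real (card D) * (\<Sum>y\<in>Y. pref_weight C \<rho> c y)"
proof -
  let ?w = "pref_weight C \<rho>"
  define k where "k = card Y"
  define S where "S = (\<Sum>y\<in>Y. ?w c y)"
  have "(\<Sum>y\<in>Y. 1 - (real (card D) - real k) * ?w c y + (\<Sum>z\<in>Y. ?w y z - ?w c z))
      \<le> (\<Sum>y\<in>Y. (\<Sum>z\<in>D. ?w y z) - (\<Sum>z\<in>D. ?w c z))"
    unfolding k_def using borda_score_diff_ge[OF prof D c Y] by (rule sum_mono)
  also have "\<dots> \<le> 0"
    using winner Y by (intro sum_nonpos) auto
  finally have "real k - (real (card D) - real k) * S + (\<Sum>y\<in>Y. \<Sum>z\<in>Y. ?w y z) - real k * S \<le> 0"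
    by (simp add: sum.distrib sum_subtractf sum_distrib_left S_def k_def)
  moreover have "2 * (\<Sum>y\<in>Y. \<Sum>z\<in>Y. ?w y z) = real k * (real k - 1)"
    unfolding k_def using sum_pref_weight_pairs[OF prof _ finite_subset[OF _ D(2)]] Y D(1) by blast
  ultimately show ?thesis
    unfolding k_def[symmetric] S_def[symmetric] by (simp add: algebra_simps)
qed

lemma choose_two_demand_bound:
  fixes N j :: nat and a :: real
  assumes N: "4 \<le> N" and j: "j + 2 \<le> N" and a: "real j + 2 \<le> 2 * real N * a"
  shows "real j + 1 \<le> real (N choose 2) * a"
proof -
  have "4 * (real j + 1) \<le> (real N - 1) * (real j + 2)"
  proof (cases "N = 4")
    case True
    then show ?thesis
      using j by simp
  next
    case False
    then have "4 * (real j + 2) \<le> (real N - 1) * (real j + 2)"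
      using N by (intro mult_right_mono) auto
    then show ?thesis
      by simp
  qed
  also have "\<dots> \<le> (real N - 1) * (2 * real N * a)"
    using N a by (intro mult_left_mono) auto
  also have "\<dots> = 2 * (real N * (real N - 1)) * a"
    by (simp add: algebra_simps)
  also have "\<dots> = 4 * (real (N choose 2) * a)"
    unfolding real_choose_two[of N, symmetric] by simp
  finally show ?thesis
    by simp
qed

lemma borda_winner_sorted_pref_weight:
  assumes prof: "ranking_profile C \<rho>" and D: "D \<subseteq> C" "finite D" and c: "c \<in> D"
    and winner: "\<forall>x\<in>D. (\<Sum>z\<in>D. pref_weight C \<rho> x z) \<le> (\<Sum>z\<in>D. pref_weight C \<rho> c z)"
    and ys: "set ys = D - {c}" "distinct ys" "sorted (map (pref_weight C \<rho> c) ys)"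
    and j: "j < length ys"
  shows "real j + 2 \<le> 2 * real (card D) * pref_weight C \<rho> c (ys ! j)"
proof -
  let ?w = "pref_weight C \<rho> c"
  define Y where "Y = set (take (Suc j) ys)"
  have card_Y: "card Y = Suc j"
    unfolding Y_def using ys(2) j by (simp add: distinct_card)
  have Y_sub: "Y \<subseteq> D - {c}"
    unfolding Y_def using set_take_subset ys(1) by metis
  have "?w y \<le> ?w (ys ! j)" if "y \<in> Y" for y
  proof -
    obtain i where "i \<le> j" "y = ys ! i"
      using \<open>y \<in> Y\<close> j by (auto simp: Y_def in_set_conv_nth less_Suc_eq_le)
    then show ?thesis
      using sorted_nth_mono[OF ys(3), of i j] j by simp
  qed
  then have "(\<Sum>y\<in>Y. ?w y) \<le> real (Suc j) * ?w (ys ! j)"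
    using sum_bounded_above[of Y ?w] card_Y by simp
  then have "2 * real (card D) * (\<Sum>y\<in>Y. ?w y) \<le> 2 * real (card D) * (real (Suc j) * ?w (ys ! j))"
    by (intro mult_left_mono) auto
  with borda_winner_pref_weight_bound[OF prof D c winner Y_sub]
  have "real (Suc j) * (real (Suc j) + 1) \<le> real (Suc j) * (2 * real (card D) * ?w (ys ! j))"
    unfolding card_Y by (simp only: ac_simps)
  then have "real (Suc j) + 1 \<le> 2 * real (card D) * ?w (ys ! j)"
    by (rule mult_left_le_imp_le) simp
  then show ?thesis
    by simp
qed

lemma leader_allocation_large:
  assumes prof: "ranking_profile C \<rho>" and D: "D \<subseteq> C" "finite D" and N: "4 \<le> card D"
  shows "\<exists>c\<in>D. \<exists>\<psi>. unit_allocation (rankings C) (\<lambda>r. real (card D choose 2) * \<rho> r)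
                      (\<lambda>y r. prefers r c y) (D - {c}) \<psi>"
proof -
  let ?w = "pref_weight C \<rho>"
  define M where "M = real (card D choose 2)"
  define borda where "borda x = (\<Sum>z\<in>D. ?w x z)" for x
  have "Max (borda ` D) \<in> borda ` D"
    using D(2) N by (intro Max_in) auto
  then obtain c where c: "c \<in> D" and "borda c = Max (borda ` D)"
    by auto
  then have winner: "\<forall>x\<in>D. (\<Sum>z\<in>D. ?w x z) \<le> (\<Sum>z\<in>D. ?w c z)"
    using D(2) by (simp add: borda_def)
  obtain xs where xs: "set xs = D - {c}" "distinct xs"
    using finite_distinct_list[of "D - {c}"] D(2) by auto
  define ys where "ys = sort_key (?w c) xs"
  have ys: "set ys = D - {c}" "distinct ys" "sorted (map (?w c) ys)"
    using xs by (simp_all add: ys_def)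
  have len: "length ys + 1 = card D"
    using distinct_card[OF ys(2)] ys(1) c D(2) N by simp
  have "\<exists>\<psi>. unit_allocation (rankings C) (\<lambda>r. M * \<rho> r) (\<lambda>y r. prefers r c y) (set ys) \<psi>"
  proof (rule unit_allocation_greedy[OF finite_rankings _ ys(2)])
    show "\<forall>r\<in>rankings C. 0 \<le> M * \<rho> r"
      using ranking_profile_nonneg[OF prof] by (simp add: M_def)
    have "real (Suc j) \<le> M * ?w c (ys ! j)" if "j < length ys" for j
      using choose_two_demand_bound[OF N _ borda_winner_sorted_pref_weight[OF prof D c winner ys that]]
        that len by (simp add: M_def)
    then show "\<forall>j<length ys. real (Suc j) \<le> (\<Sum>r\<in>{r \<in> rankings C. prefers r c (ys ! j)}. M * \<rho> r)"
      by (simp add: pref_weight_def sum_distrib_left)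
  qed
  then show ?thesis
    using c ys(1) by (auto simp: M_def)
qed

section \<open>A leader among three candidates\<close>

text \<open>For three candidates the budget is 3\<rho>, and these are Hall's conditions for allocating a
  unit to each of the two candidates below \<open>c\<close>.\<close>

definition good_leader :: "'a set \<Rightarrow> ('a list \<Rightarrow> real) \<Rightarrow> 'a set \<Rightarrow> 'a \<Rightarrow> bool" where
  "good_leader C \<rho> D c \<longleftrightarrow>
     (\<forall>y\<in>D - {c}. 1/3 \<le> pref_weight C \<rho> c y) \<and>
     2/3 \<le> sum \<rho> {r \<in> rankings C. \<exists>y\<in>D - {c}. prefers r c y}"

lemma last_place_weights_le_one:
  assumes prof: "ranking_profile C \<rho>"
  shows "sum \<rho> {r \<in> rankings C. prefers r y x \<and> prefers r z x}
       + sum \<rho> {r \<in> rankings C. prefers r x y \<and> prefers r z y}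
       + sum \<rho> {r \<in> rankings C. prefers r x z \<and> prefers r y z} \<le> 1"
proof -
  have "(\<Sum>r\<in>rankings C. \<rho> r * (of_bool (prefers r y x \<and> prefers r z x)
        + of_bool (prefers r x y \<and> prefers r z y) + of_bool (prefers r x z \<and> prefers r y z)))
      \<le> (\<Sum>r\<in>rankings C. \<rho> r * 1)"
  proof (intro sum_mono mult_left_mono)
    fix r assume r: "r \<in> rankings C"
    then show "0 \<le> \<rho> r"
      using ranking_profile_nonneg[OF prof] by blast
    show "of_bool (prefers r y x \<and> prefers r z x) + of_bool (prefers r x y \<and> prefers r z y)
        + of_bool (prefers r x z \<and> prefers r y z) \<le> (1 :: real)"
    proof -
      have "\<not> (prefers r y x \<and> prefers r x y)" "\<not> (prefers r z x \<and> prefers r x z)"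
        "\<not> (prefers r z y \<and> prefers r y z)"
        using prefers_asym[OF rankingsD(2)[OF r]] by blast+
      then show ?thesis
        by auto
    qed
  qed
  then show ?thesis
    using ranking_profile_sum[OF prof]
    by (simp add: sum_filter_of_bool sum.distrib distrib_left)
qed

lemma good_leader_of_weak_pair:
  assumes prof: "ranking_profile C \<rho>" and C: "x \<in> C" "y \<in> C" "z \<in> C"
    and dist: "x \<noteq> y" "y \<noteq> z" "x \<noteq> z"
    and last: "sum \<rho> {r \<in> rankings C. prefers r y x \<and> prefers r z x} \<le> 1/3"
    and weak: "pref_weight C \<rho> x y < 1/3"
  shows "good_leader C \<rho> {x, y, z} y"
proof -
  have nonneg: "\<forall>r\<in>rankings C. 0 \<le> \<rho> r"
    using ranking_profile_nonneg[OF prof] .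
  have yx: "2/3 < pref_weight C \<rho> y x"
    using pref_weight_swap[OF prof C(1,2) dist(1)] weak by linarith
  have yz: "1/3 \<le> pref_weight C \<rho> y z"
  proof (rule ccontr)
    assume "\<not> ?thesis"
    then have "2/3 < pref_weight C \<rho> z y"
      using pref_weight_swap[OF prof C(2,3) dist(2)] by linarith
    moreover have "pref_weight C \<rho> z y + pref_weight C \<rho> y x - 1
        \<le> sum \<rho> {r \<in> rankings C. prefers r z y \<and> prefers r y x}"
      using sum_filter_conj_ge[OF finite_rankings nonneg] ranking_profile_sum[OF prof]
      by (simp add: pref_weight_def)
    moreover have "sum \<rho> {r \<in> rankings C. prefers r z y \<and> prefers r y x}
        \<le> sum \<rho> {r \<in> rankings C. prefers r y x \<and> prefers r z x}"
      by (intro sum_filter_mono[OF finite_rankings nonneg]) (meson prefers_trans rankingsD(2))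
    ultimately show False
      using yx last by linarith
  qed
  have "pref_weight C \<rho> y x \<le> sum \<rho> {r \<in> rankings C. \<exists>u\<in>{x, y, z} - {y}. prefers r y u}"
    unfolding pref_weight_def using dist by (intro sum_filter_mono[OF finite_rankings nonneg]) auto
  then show ?thesis
    using yx yz dist by (auto simp: good_leader_def)
qed

lemma good_leader_of_strong_pairs:
  assumes prof: "ranking_profile C \<rho>" and C: "x \<in> C" "y \<in> C" "z \<in> C"
    and dist: "x \<noteq> y" "y \<noteq> z" "x \<noteq> z"
    and last: "sum \<rho> {r \<in> rankings C. prefers r y x \<and> prefers r z x} \<le> 1/3"
    and strong: "1/3 \<le> pref_weight C \<rho> x y" "1/3 \<le> pref_weight C \<rho> x z"
  shows "good_leader C \<rho> {x, y, z} x"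
proof -
  have "(\<Sum>r\<in>rankings C. \<rho> r * 1)
      \<le> (\<Sum>r\<in>rankings C. \<rho> r * (of_bool (prefers r y x \<and> prefers r z x)
                                  + of_bool (\<exists>u\<in>{y, z}. prefers r x u)))"
  proof (intro sum_mono mult_left_mono)
    fix r assume r: "r \<in> rankings C"
    then show "0 \<le> \<rho> r"
      using ranking_profile_nonneg[OF prof] by blast
    show "1 \<le> of_bool (prefers r y x \<and> prefers r z x) + (of_bool (\<exists>u\<in>{y, z}. prefers r x u) :: real)"
    proof (cases "\<exists>u\<in>{y, z}. prefers r x u")
      case False
      then have "prefers r y x \<and> prefers r z x"
        using prefers_total[of _ r] rankingsD(1)[OF r] C dist by blast
      then show ?thesis
        by simp
    qed simp
  qed
  then have "2/3 \<le> sum \<rho> {r \<in> rankings C. \<exists>u\<in>{y, z}. prefers r x u}"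
    using last ranking_profile_sum[OF prof]
    by (simp add: sum_filter_of_bool sum.distrib distrib_left)
  moreover have "{x, y, z} - {x} = {y, z}"
    using dist by auto
  ultimately show ?thesis
    using strong by (simp add: good_leader_def)
qed

lemma good_leader_of_light_last:
  assumes prof: "ranking_profile C \<rho>" and C: "x \<in> C" "y \<in> C" "z \<in> C"
    and dist: "x \<noteq> y" "y \<noteq> z" "x \<noteq> z"
    and last: "sum \<rho> {r \<in> rankings C. prefers r y x \<and> prefers r z x} \<le> 1/3"
  shows "\<exists>c\<in>{x, y, z}. good_leader C \<rho> {x, y, z} c"
proof (cases "pref_weight C \<rho> x y < 1/3")
  case True
  then show ?thesis
    using good_leader_of_weak_pair[OF prof C dist last] by blast
next
  case xy: False
  show ?thesis
  proof (cases "pref_weight C \<rho> x z < 1/3")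
    case True
    moreover have "sum \<rho> {r \<in> rankings C. prefers r z x \<and> prefers r y x} \<le> 1/3"
      using last by (simp add: conj_commute)
    ultimately have "good_leader C \<rho> {x, z, y} z"
      using dist by (intro good_leader_of_weak_pair[OF prof C(1,3,2)]) auto
    then show ?thesis
      by (auto simp: insert_commute)
  next
    case False
    then show ?thesis
      using good_leader_of_strong_pairs[OF prof C dist last] xy by auto
  qed
qed

lemma good_leader_exists:
  assumes prof: "ranking_profile C \<rho>" and D: "D \<subseteq> C" "card D = 3"
  shows "\<exists>c\<in>D. good_leader C \<rho> D c"
proof -
  obtain x y z where xyz: "D = {x, y, z}" and dist: "x \<noteq> y" "y \<noteq> z" "x \<noteq> z"
    using D(2) card_3_iff by metis
  then have C: "x \<in> C" "y \<in> C" "z \<in> C"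
    using D(1) by auto
  define last where "last a b c = sum \<rho> {r \<in> rankings C. prefers r b a \<and> prefers r c a}" for a b c
  have "last x y z + last y x z + last z x y \<le> 1"
    using last_place_weights_le_one[OF prof, of y x z] by (simp add: last_def)
  then consider "last x y z \<le> 1/3" | "last y x z \<le> 1/3" | "last z x y \<le> 1/3"
    by linarith
  then show ?thesis
  proof cases
    case 1
    then show ?thesis
      using good_leader_of_light_last[OF prof C dist] unfolding xyz last_def by blast
  next
    case 2
    then have "\<exists>c\<in>{y, x, z}. good_leader C \<rho> {y, x, z} c"
      using dist by (intro good_leader_of_light_last[OF prof C(2,1,3)]) (auto simp: last_def)
    then show ?thesis
      unfolding xyz by (simp add: insert_commute)
  next
    case 3
    then have "\<exists>c\<in>{z, x, y}. good_leader C \<rho> {z, x, y} c"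
      using dist by (intro good_leader_of_light_last[OF prof C(3,1,2)]) (auto simp: last_def)
    then show ?thesis
      unfolding xyz by (simp add: insert_commute)
  qed
qed

lemma leader_allocation_three:
  assumes prof: "ranking_profile C \<rho>" and D: "D \<subseteq> C" "card D = 3"
  shows "\<exists>c\<in>D. \<exists>\<psi>. unit_allocation (rankings C) (\<lambda>r. real (card D choose 2) * \<rho> r)
                      (\<lambda>y r. prefers r c y) (D - {c}) \<psi>"
proof -
  obtain c where c: "c \<in> D" and good: "good_leader C \<rho> D c"
    using good_leader_exists[OF prof D] by blast
  have "card (D - {c}) = 2"
    using D(2) c by (simp add: card_Diff_singleton_if)
  then obtain a b where ab: "D - {c} = {a, b}" "a \<noteq> b"
    using card_2_iff by metis
  have three: "real (card D choose 2) = 3"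
    using D(2) by (simp add: numeral_3_eq_3 numeral_2_eq_2)
  have w: "\<forall>r\<in>rankings C. 0 \<le> 3 * \<rho> r"
    using ranking_profile_nonneg[OF prof] by simp
  have scaled: "sum (\<lambda>r. 3 * \<rho> r) {r \<in> rankings C. P r} = 3 * sum \<rho> {r \<in> rankings C. P r}" for P
    by (simp add: sum_distrib_left)
  have "{r \<in> rankings C. \<exists>u\<in>D - {c}. prefers r c u} = {r \<in> rankings C. prefers r c a \<or> prefers r c b}"
    unfolding ab by auto
  then have "2 \<le> sum (\<lambda>r. 3 * \<rho> r) {r \<in> rankings C. prefers r c a \<or> prefers r c b}"
    using good unfolding good_leader_def scaled by simp
  moreover have "1 \<le> sum (\<lambda>r. 3 * \<rho> r) {r \<in> rankings C. prefers r c y}" if "y \<in> {a, b}" for y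
    using good that unfolding good_leader_def scaled pref_weight_def ab[symmetric] by (simp add: mult.commute)
  ultimately obtain \<psi> where "unit_allocation (rankings C) (\<lambda>r. 3 * \<rho> r) (\<lambda>y r. prefers r c y) {a, b} \<psi>"
    using unit_allocation_pair[OF finite_rankings w ab(2), where P = "\<lambda>y r. prefers r c y"] by blast
  then show ?thesis
    using c unfolding three ab[symmetric] by blast
qed

section \<open>Pair-pricings by induction\<close>

lemma leader_allocation_exists:
  assumes prof: "ranking_profile C \<rho>" and D: "D \<subseteq> C" "3 \<le> card D"
  shows "\<exists>c\<in>D. \<exists>\<psi>. unit_allocation (rankings C) (\<lambda>r. real (card D choose 2) * \<rho> r)
                      (\<lambda>y r. prefers r c y) (D - {c}) \<psi>"
proof (cases "card D = 3")
  case True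
  then show ?thesis
    using leader_allocation_three[OF prof D(1)] by blast
next
  case False
  then show ?thesis
    using leader_allocation_large[OF prof D(1)] D(2) card.infinite by fastforce
qed

lemma real_Suc_choose_two: "real (Suc n choose 2) = real n + real (n choose 2)"
  by (simp add: numeral_2_eq_2)

definition residual_profile ::
    "nat \<Rightarrow> ('a list \<Rightarrow> real) \<Rightarrow> ('b \<Rightarrow> 'a list \<Rightarrow> real) \<Rightarrow> 'b set \<Rightarrow> 'a list \<Rightarrow> real" where
  "residual_profile n \<rho> \<psi> Y r = (real (Suc n choose 2) * \<rho> r - (\<Sum>y\<in>Y. \<psi> y r)) / real (n choose 2)"

lemma residual_ranking_profile:
  assumes prof: "ranking_profile C \<rho>"
    and alloc: "unit_allocation (rankings C) (\<lambda>r. real (Suc n choose 2) * \<rho> r) P Y \<psi>"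
    and Y: "card Y = n" and n: "2 \<le> n"
  shows "ranking_profile C (residual_profile n \<rho> \<psi> Y)"
proof (rule ranking_profileI)
  have pos: "0 < real (n choose 2)"
    using n by simp
  show "\<forall>r\<in>rankings C. 0 \<le> residual_profile n \<rho> \<psi> Y r"
    using alloc pos by (simp add: unit_allocation_def residual_profile_def)
  have "(\<Sum>r\<in>rankings C. real (Suc n choose 2) * \<rho> r - (\<Sum>y\<in>Y. \<psi> y r))
      = real (Suc n choose 2) - real n"
    using unit_allocation_total[OF alloc] ranking_profile_sum[OF prof] Y
    by (simp add: sum_subtractf sum_distrib_left[symmetric])
  then show "sum (residual_profile n \<rho> \<psi> Y) (rankings C) = 1"
    using pos by (simp add: residual_profile_def sum_divide_distrib[symmetric] real_Suc_choose_two)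
qed

text \<open>The induction invariant: pair-priceability of a ranking of a subset of the candidates,
  while the voters still rank all of \<open>C\<close>; a voter pays for a pair only if she agrees with it.\<close>

definition pair_pricing :: "'a set \<Rightarrow> ('a list \<Rightarrow> real) \<Rightarrow> 'a list \<Rightarrow> ('a list \<Rightarrow> 'a \<times> 'a \<Rightarrow> real) \<Rightarrow> bool" where
  "pair_pricing C \<rho> rr \<pi> \<longleftrightarrow>
     (\<forall>r\<in>rankings C. \<forall>(x, y)\<in>A_pairs rr. 0 \<le> \<pi> r (x, y) \<and> (\<not> prefers r x y \<longrightarrow> \<pi> r (x, y) = 0)) \<and>
     (\<forall>r\<in>rankings C. (\<Sum>p\<in>A_pairs rr. \<pi> r p) \<le> real (length rr choose 2) * \<rho> r) \<and>
     (\<forall>p\<in>A_pairs rr. (\<Sum>r\<in>rankings C. \<pi> r p) \<le> 1) \<and>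
     real (length rr choose 2) - 1 < (\<Sum>r\<in>rankings C. \<Sum>p\<in>A_pairs rr. \<pi> r p)"

lemma finite_A_pairs [simp]: "finite (A_pairs rr)"
proof (rule finite_subset)
  show "A_pairs rr \<subseteq> set rr \<times> set rr"
    unfolding A_pairs_def by (auto dest: prefers_set)
qed simp

lemma A_pairs_Nil [simp]: "A_pairs [] = {}"
  by (simp add: A_pairs_def)

lemma A_pairs_Cons: "A_pairs (c # l) = Pair c ` set l \<union> A_pairs l"
  unfolding A_pairs_def by (auto simp: prefers_Cons)

lemma pair_pricing_two:
  assumes prof: "ranking_profile C \<rho>" and D: "D \<subseteq> C" "card D = 2"
  shows "\<exists>rr\<in>rankings D. \<exists>\<pi>. pair_pricing C \<rho> rr \<pi>"
proof -
  obtain a b where ab: "D = {a, b}" "a \<noteq> b"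
    using D(2) card_2_iff by metis
  then have swap: "pref_weight C \<rho> a b + pref_weight C \<rho> b a = 1"
    using pref_weight_swap[OF prof] D(1) by auto
  obtain x y where xy: "D = {x, y}" "x \<noteq> y" "0 < pref_weight C \<rho> x y"
  proof (cases "0 < pref_weight C \<rho> a b")
    case True
    then show ?thesis using that ab by blast
  next
    case False
    then have "0 < pref_weight C \<rho> b a"
      using swap by linarith
    then show ?thesis using that ab by (metis insert_commute)
  qed
  have le1: "pref_weight C \<rho> x y \<le> 1"
    using pref_weight_swap[OF prof, of x y] pref_weight_nonneg[OF prof, of y x] xy D(1) by auto
  have pairs: "A_pairs [x, y] = {(x, y)}"
    by (simp add: A_pairs_Cons)
  have one: "length [x, y] choose 2 = 1"
    by (simp add: numeral_2_eq_2)
  have "pair_pricing C \<rho> [x, y] (\<lambda>r p. \<rho> r * of_bool (prefers r x y))"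
    unfolding pair_pricing_def pairs one
    using ranking_profile_nonneg[OF prof] le1 xy(3) by (auto simp: pref_weight_of_bool)
  moreover have "[x, y] \<in> rankings D"
    using xy by (auto simp: rankings_def)
  ultimately show ?thesis
    by blast
qed

lemma pair_pricing_Cons:
  assumes prof: "ranking_profile C \<rho>"
    and alloc: "unit_allocation (rankings C) (\<lambda>r. real (Suc n choose 2) * \<rho> r) (\<lambda>y r. prefers r c y) (set rr) \<psi>"
    and rr: "distinct rr" "length rr = n" "c \<notin> set rr" and n: "2 \<le> n"
    and rest: "pair_pricing C (residual_profile n \<rho> \<psi> (set rr)) rr \<pi>"
  shows "pair_pricing C \<rho> (c # rr) (\<lambda>r p. if fst p = c then \<psi> (snd p) r else \<pi> r p)"
proof -
  define \<pi>c where "\<pi>c r p = (if fst p = c then \<psi> (snd p) r else \<pi> r p)" for r p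
  have pos: "0 < real (n choose 2)"
    using n by simp
  have fst_rest: "fst p \<noteq> c" if "p \<in> A_pairs rr" for p
    using that rr(3) by (auto simp: A_pairs_def dest: prefers_set)
  have disj: "Pair c ` set rr \<inter> A_pairs rr = {}"
    by (auto dest: fst_rest)
  have split: "(\<Sum>p\<in>A_pairs (c # rr). \<pi>c r p) = (\<Sum>y\<in>set rr. \<psi> y r) + (\<Sum>p\<in>A_pairs rr. \<pi> r p)" for r
  proof -
    have "(\<Sum>p\<in>Pair c ` set rr. \<pi>c r p) = (\<Sum>y\<in>set rr. \<psi> y r)"
      by (subst sum.reindex) (auto simp: inj_on_def \<pi>c_def)
    moreover have "(\<Sum>p\<in>A_pairs rr. \<pi>c r p) = (\<Sum>p\<in>A_pairs rr. \<pi> r p)"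
      using fst_rest by (intro sum.cong) (auto simp: \<pi>c_def)
    ultimately show ?thesis
      unfolding A_pairs_Cons by (simp add: sum.union_disjoint[OF _ _ disj])
  qed
  have card: "card (set rr) = n"
    using rr by (simp add: distinct_card)
  have "pair_pricing C \<rho> (c # rr) \<pi>c"
    unfolding pair_pricing_def
  proof (intro conjI)
    show "\<forall>r\<in>rankings C. \<forall>(x, y)\<in>A_pairs (c # rr). 0 \<le> \<pi>c r (x, y) \<and> (\<not> prefers r x y \<longrightarrow> \<pi>c r (x, y) = 0)"
      using alloc rest fst_rest by (fastforce simp: A_pairs_Cons \<pi>c_def unit_allocation_def pair_pricing_def)
    show "\<forall>r\<in>rankings C. (\<Sum>p\<in>A_pairs (c # rr). \<pi>c r p) \<le> real (length (c # rr) choose 2) * \<rho> r"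
      using rest pos rr(2) by (auto simp: split pair_pricing_def residual_profile_def)
    show "\<forall>p\<in>A_pairs (c # rr). (\<Sum>r\<in>rankings C. \<pi>c r p) \<le> 1"
      using alloc rest fst_rest by (auto simp: A_pairs_Cons \<pi>c_def unit_allocation_def pair_pricing_def)
    show "real (length (c # rr) choose 2) - 1 < (\<Sum>r\<in>rankings C. \<Sum>p\<in>A_pairs (c # rr). \<pi>c r p)"
      using rest unit_allocation_total[OF alloc] card rr(2)
      by (simp add: split sum.distrib pair_pricing_def real_Suc_choose_two)
  qed
  then show ?thesis
    unfolding \<pi>c_def .
qed

lemma pair_pricing_exists:
  assumes "2 \<le> card D" and "D \<subseteq> C" and "ranking_profile C \<rho>"
  shows "\<exists>rr\<in>rankings D. \<exists>\<pi>. pair_pricing C \<rho> rr \<pi>"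
  using assms
proof (induction "card D" arbitrary: D \<rho> rule: nat_induct_at_least)
  case base
  then show ?case
    by (intro pair_pricing_two) auto
next
  case (Suc n)
  have card_D: "card D = Suc n"
    using Suc.hyps(3) by simp
  then have "3 \<le> card D"
    using Suc.hyps(1) by simp
  then obtain c \<psi> where c: "c \<in> D"
    and alloc: "unit_allocation (rankings C) (\<lambda>r. real (Suc n choose 2) * \<rho> r) (\<lambda>y r. prefers r c y) (D - {c}) \<psi>"
    using leader_allocation_exists[OF Suc.prems(2,1)] unfolding card_D by blast
  have card_rest: "card (D - {c}) = n"
    using c card_D by (simp add: card_Diff_singleton)
  have "ranking_profile C (residual_profile n \<rho> \<psi> (D - {c}))"
    by (rule residual_ranking_profile[OF Suc.prems(2) alloc card_rest Suc.hyps(1)])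
  moreover have "D - {c} \<subseteq> C"
    using Suc.prems(1) by blast
  ultimately obtain rr \<pi> where rr: "rr \<in> rankings (D - {c})"
    and rest: "pair_pricing C (residual_profile n \<rho> \<psi> (D - {c})) rr \<pi>"
    using Suc.hyps(2)[OF card_rest[symmetric]] by blast
  have set_rr: "set rr = D - {c}" and "distinct rr"
    using rankingsD[OF rr] by auto
  then have "length rr = n" and "c \<notin> set rr"
    using card_rest distinct_card[of rr] by auto
  moreover note alloc rest
  ultimately have "pair_pricing C \<rho> (c # rr) (\<lambda>r p. if fst p = c then \<psi> (snd p) r else \<pi> r p)"
    using pair_pricing_Cons[OF Suc.prems(2) _ \<open>distinct rr\<close> _ _ Suc.hyps(1)] unfolding set_rr by blast
  moreover have "c # rr \<in> rankings D"
    unfolding rankings_def using set_rr \<open>distinct rr\<close> c by (intro permutations_of_setI) auto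
  ultimately show ?case
    by blast
qed

lemma u_pair: "x \<noteq> y \<Longrightarrow> u r x {x, y} = of_bool (prefers r x y)"
proof -
  assume "x \<noteq> y"
  then have "{y' \<in> {x, y} - {x}. prefers r x y'} = (if prefers r x y then {y} else {})"
    by auto
  then show ?thesis
    by (simp add: u_def)
qed

lemma pair_pricing_imp_pair_priceable:
  assumes rr: "rr \<in> rankings C" and price: "pair_pricing C R rr \<pi>"
  shows "pair_priceable C R rr"
  unfolding pair_priceable_def
proof (intro exI conjI)
  have "length rr = card C"
    using rankingsD[OF rr] distinct_card by metis
  then show "\<forall>r\<in>rankings C. (\<Sum>p\<in>A_pairs rr. \<pi> r p) \<le> real (card C choose 2) * R r"
    and "\<forall>p\<in>A_pairs rr. (\<Sum>r\<in>rankings C. \<pi> r p) \<le> 1"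
    and "real (card C choose 2) - 1 < (\<Sum>r\<in>rankings C. \<Sum>p\<in>A_pairs rr. \<pi> r p)"
    using price by (auto simp: pair_pricing_def)
  have le1: "\<pi> r p \<le> 1" if "r \<in> rankings C" "p \<in> A_pairs rr" for r p
  proof -
    have "\<pi> r p \<le> (\<Sum>r'\<in>rankings C. \<pi> r' p)"
      using that price by (intro member_le_sum) (auto simp: pair_pricing_def)
    then show ?thesis
      using that price by (force simp: pair_pricing_def)
  qed
  show "\<forall>r\<in>rankings C. \<forall>p\<in>A_pairs rr. 0 \<le> \<pi> r p \<and> \<pi> r p \<le> 1"
    using price le1 by (auto simp: pair_pricing_def)
  have "x \<noteq> y" if "(x, y) \<in> A_pairs rr" for x y
    using that prefers_irrefl[OF rankingsD(2)[OF rr]] by (auto simp: A_pairs_def)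
  then show "\<forall>r\<in>rankings C. \<forall>(x, y)\<in>A_pairs rr. \<pi> r (x, y) \<le> real (u r x {x, y})"
    using price le1 by (fastforce simp: pair_pricing_def u_pair)
qed

theorem mainTheorem10:
  fixes C :: "'a set" and R :: "'a list \<Rightarrow> real"
  assumes "finite C" and "card C \<ge> 2" and "ranking_profile C R"
  shows "\<exists>rr \<in> rankings C. pair_priceable C R rr"
  using pair_pricing_exists[OF assms(2) subset_refl assms(3)] pair_pricing_imp_pair_priceable by blast

end
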